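(* Let $X$ be a (real or complex) Banach space, $S$ a Hausdorff topological space, and $J\colon X\to C^{b}(S)$ a nice embedding (see context). Then for every $T\in L(X)$ there is a scalar $\lambda$ with $|\lambda|=1$ such that $\lambda T$ satisfies the Daugavet equation $\|\mathrm{Id}+\lambda T\|=1+\|\lambda T\|$.
   Context: $C^{b}(S)$ denotes the sup-normed Banach space of bounded continuous scalar-valued functions on $S$, and $\delta_s$ the functional $f\mapsto f(s)$. A closed subspace $F$ of a Banach space $E$ is an $L$-summand if there is a projection $\Pi$ of $E$ onto $F$ with $\|\xi\|=\|\Pi\xi\|+\|\xi-\Pi\xi\|$ for all $\xi\in E$. A linear map $J\colon X\to C^b(S)$ is a nice embedding if $J$ is an isometry and for every $s\in S$: (N1) $p_s:=J^*(\delta_s)$ satisfies $\|p_s\|=1$; (N2) $\operatorname{lin}\{p_s\}$ is an $L$-summand in $X^*$. $L(X)$ denotes the bounded linear operators on $X$. *)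

theory Defs
  imports "HOL-Analysis.Analysis"
begin

text \<open>A Banach space over K is a real Banach space (type class banach)
  together with a scalar multiplication by elements of K extending the real one,
  satisfying the module laws and absolute homogeneity of the norm.\<close>

definition scalar_field :: "complex set \<Rightarrow> bool" where
  "scalar_field K \<longleftrightarrow> K = \<real> \<or> K = UNIV"

definition banach_over :: "complex set \<Rightarrow> (complex \<Rightarrow> 'a::banach \<Rightarrow> 'a) \<Rightarrow> bool" where
  "banach_over K sm \<longleftrightarrow>
     (\<forall>r::real. \<forall>x. sm (of_real r) x = r *\<^sub>R x) \<and>
     (\<forall>c\<in>K. \<forall>d\<in>K. \<forall>x y.
        sm c (x + y) = sm c x + sm c y \<and>
        sm (c + d) x = sm c x + sm d x \<and>
        sm (c * d) x = sm c (sm d x) \<and>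
        norm (sm c x) = cmod c * norm x)"

definition bounded_operator :: "complex set \<Rightarrow> (complex \<Rightarrow> 'a::banach \<Rightarrow> 'a) \<Rightarrow> ('a \<Rightarrow> 'a) \<Rightarrow> bool" where
  "bounded_operator K sm T \<longleftrightarrow> bounded_linear T \<and> (\<forall>c\<in>K. \<forall>x. T (sm c x) = sm c (T x))"

definition dual_space :: "complex set \<Rightarrow> (complex \<Rightarrow> 'a::banach \<Rightarrow> 'a) \<Rightarrow> ('a \<Rightarrow> complex) set" where
  "dual_space K sm = {f. bounded_linear f \<and> (\<forall>c\<in>K. \<forall>x. f (sm c x) = c * f x) \<and> (\<forall>x. f x \<in> K)}"

definition L_summand_dual :: "complex set \<Rightarrow> (complex \<Rightarrow> 'a::banach \<Rightarrow> 'a) \<Rightarrow> ('a \<Rightarrow> complex) set \<Rightarrow> bool" where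
  "L_summand_dual K sm F \<longleftrightarrow>
     (let D = dual_space K sm in
       F \<subseteq> D \<and> (\<lambda>x. 0) \<in> F \<and>
       (\<forall>f\<in>F. \<forall>g\<in>F. (\<lambda>x. f x + g x) \<in> F) \<and>
       (\<forall>c\<in>K. \<forall>f\<in>F. (\<lambda>x. c * f x) \<in> F) \<and>
       (\<forall>\<xi>\<in>D. (\<forall>e>0. \<exists>\<eta>\<in>F. onorm (\<lambda>x. \<xi> x - \<eta> x) < e) \<longrightarrow> \<xi> \<in> F) \<and>
       (\<exists>P. (\<forall>\<xi>\<in>D. P \<xi> \<in> F) \<and> (\<forall>\<eta>\<in>F. P \<eta> = \<eta>) \<and>
            (\<forall>\<xi>\<in>D. \<forall>\<eta>\<in>D. P (\<lambda>x. \<xi> x + \<eta> x) = (\<lambda>x. P \<xi> x + P \<eta> x)) \<and>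
            (\<forall>c\<in>K. \<forall>\<xi>\<in>D. P (\<lambda>x. c * \<xi> x) = (\<lambda>x. c * P \<xi> x)) \<and>
            (\<forall>\<xi>\<in>D. onorm \<xi> = onorm (P \<xi>) + onorm (\<lambda>x. \<xi> x - P \<xi> x))))"

text \<open>Nice embedding J : X \<rightarrow> C^b(S) (K-valued bounded continuous functions, sup norm).
  p_s = J^*(delta_s) is the functional x \<mapsto> (J x)(s).\<close>
definition nice_embedding ::
  "complex set \<Rightarrow> (complex \<Rightarrow> 'a::banach \<Rightarrow> 'a) \<Rightarrow> ('a \<Rightarrow> ('s::topological_space \<Rightarrow>\<^sub>C complex)) \<Rightarrow> bool" where
  "nice_embedding K sm J \<longleftrightarrow>
     (\<forall>x s. apply_bcontfun (J x) s \<in> K) \<and>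
     (\<forall>x y. J (x + y) = J x + J y) \<and>
     (\<forall>c\<in>K. \<forall>x s. apply_bcontfun (J (sm c x)) s = c * apply_bcontfun (J x) s) \<and>
     (\<forall>x. norm (J x) = norm x) \<and>
     (\<forall>s. onorm (\<lambda>x. apply_bcontfun (J x) s) = 1 \<and>
          L_summand_dual K sm {(\<lambda>x. c * apply_bcontfun (J x) s) | c. c \<in> K})"

end

theory Submission
  imports Defs
begin

text \<open>The function \<open>l \<mapsto> \<parallel>Id + l T\<parallel>\<close> is Lipschitz on the compact set of unimodular
  scalars and bounded by \<open>1 + \<parallel>T\<parallel>\<close>, so it suffices to show that its supremum is \<open>1 + \<parallel>T\<parallel>\<close>.
  Since \<open>J\<close> is isometric, \<open>\<parallel>T\<parallel> = sup\<^sub>s \<parallel>T\<^sup>* p\<^sub>s\<parallel>\<close>. Splitting \<open>T\<^sup>* p\<^sub>s = c p\<^sub>s + \<eta>\<close> along the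
  L-summand spanned by \<open>p\<^sub>s\<close> and choosing \<open>|l| = 1\<close> with \<open>l c = |c|\<close>, the functional
  \<open>(Id + l T)\<^sup>* p\<^sub>s = (1 + |c|) p\<^sub>s + l \<eta>\<close> has norm \<open>1 + |c| + \<parallel>\<eta>\<parallel> = 1 + \<parallel>T\<^sup>* p\<^sub>s\<parallel>\<close>.\<close>

lemma onorm_eq_scaled:
  fixes f :: "'a::real_normed_vector \<Rightarrow> 'b::real_normed_vector"
    and g :: "'a \<Rightarrow> 'c::real_normed_vector"
  assumes f: "bounded_linear f" and g: "bounded_linear g" and "0 \<le> a"
    and norm_g: "\<And>x. norm (g x) = a * norm (f x)"
  shows "onorm g = a * onorm f"
proof (rule antisym)
  show "onorm g \<le> a * onorm f"
  proof (rule onorm_bound)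
    show "0 \<le> a * onorm f" using \<open>0 \<le> a\<close> onorm_pos_le[OF f] by simp
    show "norm (g x) \<le> a * onorm f * norm x" for x
      using norm_g[of x] onorm[OF f, of x] \<open>0 \<le> a\<close> by (simp add: mult_left_mono mult.assoc)
  qed
next
  show "a * onorm f \<le> onorm g"
  proof (cases "a = 0")
    case True
    then show ?thesis using onorm_pos_le[OF g] by simp
  next
    case False
    with \<open>0 \<le> a\<close> have "0 < a" by simp
    have "onorm f \<le> onorm g / a"
    proof (rule onorm_bound)
      show "0 \<le> onorm g / a" using \<open>0 < a\<close> onorm_pos_le[OF g] by simp
      show "norm (f x) \<le> onorm g / a * norm x" for x
        using norm_g[of x] onorm[OF g, of x] \<open>0 < a\<close> by (simp add: field_simps)
    qed
    then show ?thesis using \<open>0 < a\<close> by (simp add: field_simps)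
  qed
qed

lemma onorm_mult_left:
  fixes f :: "'a::real_normed_vector \<Rightarrow> complex"
  assumes "bounded_linear f"
  shows "onorm (\<lambda>x. c * f x) = cmod c * onorm f"
  by (rule onorm_eq_scaled[OF assms bounded_linear_compose[OF bounded_linear_mult_right assms]])
     (auto simp: norm_mult)

lemma compact_attains_approximated_bound:
  fixes f :: "'a::topological_space \<Rightarrow> real"
  assumes "compact C" and "continuous_on C f"
    and le: "\<And>x. x \<in> C \<Longrightarrow> f x \<le> M"
    and approx: "\<And>e. 0 < e \<Longrightarrow> \<exists>x\<in>C. M - e < f x"
  shows "\<exists>x\<in>C. f x = M"
proof -
  have "C \<noteq> {}" using approx[of 1] by auto
  then obtain x where "x \<in> C" and max: "\<forall>y\<in>C. f y \<le> f x"
    using continuous_attains_sup[OF \<open>compact C\<close> _ \<open>continuous_on C f\<close>] by blast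
  have "M \<le> f x"
  proof (rule field_le_epsilon)
    fix e :: real assume "0 < e"
    then show "M \<le> f x + e" using approx max by force
  qed
  with le[OF \<open>x \<in> C\<close>] \<open>x \<in> C\<close> show ?thesis by force
qed

lemma isometry_onorm_le_evaluations:
  fixes J :: "'a::real_normed_vector \<Rightarrow> ('s::topological_space \<Rightarrow>\<^sub>C 'b::real_normed_vector)"
    and T :: "'c::real_normed_vector \<Rightarrow> 'a"
  assumes isometry: "\<And>x. norm (J x) = norm x"
    and lin: "\<And>s. bounded_linear (\<lambda>x. apply_bcontfun (J (T x)) s)"
    and le: "\<And>s. onorm (\<lambda>x. apply_bcontfun (J (T x)) s) \<le> M"
  shows "onorm T \<le> M"
proof (rule onorm_bound)
  show "0 \<le> M" using onorm_pos_le[OF lin] le order_trans by blast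
  fix x
  have "norm (J (T x)) \<le> M * norm x"
  proof (rule norm_bound)
    fix s
    show "norm (apply_bcontfun (J (T x)) s) \<le> M * norm x"
      using onorm[OF lin[of s], of x] le[of s] by (meson mult_right_mono norm_ge_zero order_trans)
  qed
  then show "norm (T x) \<le> M * norm x" using isometry by simp
qed

lemma dual_space_comp_operator:
  assumes "f \<in> dual_space K sm" and "bounded_operator K sm T"
  shows "(\<lambda>x. f (T x)) \<in> dual_space K sm"
  using assms bounded_linear_compose[of f T]
  by (auto simp: dual_space_def bounded_operator_def)

locale scalar_banach =
  fixes K :: "complex set" and sm :: "complex \<Rightarrow> 'a::banach \<Rightarrow> 'a"
  assumes scalar_field: "scalar_field K"
    and banach_over: "banach_over K sm"
begin

lemma of_real_in_K: "of_real r \<in> K"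
  using scalar_field by (auto simp: scalar_field_def)

lemma one_in_K: "1 \<in> K"
  using of_real_in_K[of 1] by simp

lemma K_closed_ops:
  assumes "a \<in> K" and "b \<in> K"
  shows "a + b \<in> K" and "a - b \<in> K" and "a * b \<in> K"
  using scalar_field assms by (auto simp: scalar_field_def)

lemma closed_K: "closed K"
  using scalar_field closed_complex_Reals by (auto simp: scalar_field_def)

lemma K_phase:
  assumes "c \<in> K"
  obtains l where "l \<in> K" and "cmod l = 1" and "l * c = of_real (cmod c)"
proof (cases "c = 0")
  case True
  then show ?thesis using that one_in_K by simp
next
  case False
  define l where "l = cnj c / of_real (cmod c)"
  have "l \<in> K" using scalar_field assms by (auto simp: scalar_field_def l_def Reals_cnj_iff)
  moreover have "cmod l = 1" using False by (simp add: l_def norm_divide)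
  moreover have "l * c = of_real (cmod c)"
    using False complex_norm_square[of c]
    by (simp add: l_def power2_eq_square field_simps)
  ultimately show ?thesis by (rule that)
qed

lemma norm_sm: "l \<in> K \<Longrightarrow> norm (sm l x) = cmod l * norm x"
  using banach_over by (simp add: banach_over_def)

lemma sm_add_left: "l \<in> K \<Longrightarrow> l' \<in> K \<Longrightarrow> sm (l + l') x = sm l x + sm l' x"
  using banach_over by (simp add: banach_over_def)

lemma bounded_linear_sm:
  assumes l: "l \<in> K"
  shows "bounded_linear (sm l)"
proof (rule bounded_linear_intro)
  have sm_of_real: "sm (of_real r) x = r *\<^sub>R x" for r x
    using banach_over by (simp add: banach_over_def)
  have sm_mult: "c \<in> K \<Longrightarrow> d \<in> K \<Longrightarrow> sm (c * d) x = sm c (sm d x)" for c d x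
    using banach_over by (simp add: banach_over_def)
  show "sm l (x + y) = sm l x + sm l y" for x y
    using banach_over l by (simp add: banach_over_def)
  show "sm l (r *\<^sub>R x) = r *\<^sub>R sm l x" for r x
    using sm_mult[OF l of_real_in_K] sm_mult[OF of_real_in_K l]
    by (simp add: sm_of_real mult.commute)
  show "norm (sm l x) \<le> norm x * cmod l" for x
    using norm_sm[OF l] by (simp add: mult.commute)
qed

lemma bounded_linear_sm_comp:
  "bounded_linear T \<Longrightarrow> l \<in> K \<Longrightarrow> bounded_linear (\<lambda>x. sm l (T x))"
  using bounded_linear_compose[OF bounded_linear_sm] by blast

lemma onorm_sm_comp:
  "bounded_linear T \<Longrightarrow> l \<in> K \<Longrightarrow> onorm (\<lambda>x. sm l (T x)) = cmod l * onorm T"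
  by (rule onorm_eq_scaled) (auto intro: bounded_linear_sm_comp simp: norm_sm)

lemma onorm_id_plus_sm_le:
  assumes "bounded_linear T" and "l \<in> K" and "cmod l = 1"
  shows "onorm (\<lambda>x. x + sm l (T x)) \<le> 1 + onorm T"
proof -
  have "onorm (\<lambda>x. x + sm l (T x)) \<le> onorm (\<lambda>x::'a. x) + onorm (\<lambda>x. sm l (T x))"
    using onorm_triangle[OF bounded_linear_ident bounded_linear_sm_comp[OF assms(1,2)]] by simp
  moreover have "onorm (\<lambda>x::'a. x) \<le> 1" by (rule onorm_id_le)
  ultimately show ?thesis using onorm_sm_comp[OF assms(1,2)] \<open>cmod l = 1\<close> by simp
qed

lemma lipschitz_on_onorm_id_plus_sm:
  assumes T: "bounded_linear T"
  shows "lipschitz_on (onorm T) K (\<lambda>l. onorm (\<lambda>x. x + sm l (T x)))"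
proof (rule lipschitz_onI)
  have le: "onorm (\<lambda>x. x + sm l (T x)) \<le> onorm (\<lambda>x. x + sm l' (T x)) + onorm T * dist l l'"
    if "l \<in> K" "l' \<in> K" for l l'
  proof -
    have "l - l' \<in> K" using K_closed_ops that by blast
    have "(\<lambda>x. x + sm l (T x)) = (\<lambda>x. (x + sm l' (T x)) + sm (l - l') (T x))"
      using sm_add_left[OF \<open>l - l' \<in> K\<close> \<open>l' \<in> K\<close>] by (metis add.assoc add.commute diff_add_cancel)
    then have "onorm (\<lambda>x. x + sm l (T x))
        \<le> onorm (\<lambda>x. x + sm l' (T x)) + onorm (\<lambda>x. sm (l - l') (T x))"
      using onorm_triangle[OF bounded_linear_add[OF bounded_linear_ident
          bounded_linear_sm_comp[OF T \<open>l' \<in> K\<close>]] bounded_linear_sm_comp[OF T \<open>l - l' \<in> K\<close>]]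
      by simp
    then show ?thesis
      using onorm_sm_comp[OF T \<open>l - l' \<in> K\<close>] by (simp add: dist_norm mult.commute)
  qed
  show "dist (onorm (\<lambda>x. x + sm l (T x))) (onorm (\<lambda>x. x + sm l' (T x))) \<le> onorm T * dist l l'"
    if "l \<in> K" "l' \<in> K" for l l'
    using le[OF that] le[OF that(2,1)] by (simp add: dist_real_def dist_commute abs_le_iff)
  show "0 \<le> onorm T" using onorm_pos_le[OF T] .
qed

lemma dual_space_add:
  assumes "f \<in> dual_space K sm" and "g \<in> dual_space K sm"
  shows "(\<lambda>x. f x + g x) \<in> dual_space K sm"
  using assms bounded_linear_add[of f g] K_closed_ops(1)
  by (auto simp: dual_space_def distrib_left)

lemma dual_space_mult_left:
  assumes "c \<in> K" and "f \<in> dual_space K sm"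
  shows "(\<lambda>x. c * f x) \<in> dual_space K sm"
  using assms bounded_linear_compose[OF bounded_linear_mult_right, of f c] K_closed_ops(3)
  by (auto simp: dual_space_def mult.left_commute)

lemma L_summand_line_norm_add:
  assumes F: "L_summand_dual K sm {(\<lambda>x. c * p x) | c. c \<in> K}"
    and norm_p: "onorm p = 1" and \<xi>: "\<xi> \<in> dual_space K sm"
  shows "\<exists>l\<in>K. cmod l = 1 \<and> onorm (\<lambda>x. p x + l * \<xi> x) = 1 + onorm \<xi>"
proof -
  let ?D = "dual_space K sm" and ?F = "{(\<lambda>x. c * p x) | c. c \<in> K}"
  obtain P where PF: "\<forall>\<xi>\<in>?D. P \<xi> \<in> ?F" and Pid: "\<forall>\<eta>\<in>?F. P \<eta> = \<eta>"
    and Padd: "\<forall>\<xi>\<in>?D. \<forall>\<eta>\<in>?D. P (\<lambda>x. \<xi> x + \<eta> x) = (\<lambda>x. P \<xi> x + P \<eta> x)"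
    and Pmult: "\<forall>c\<in>K. \<forall>\<xi>\<in>?D. P (\<lambda>x. c * \<xi> x) = (\<lambda>x. c * P \<xi> x)"
    and Pnorm: "\<forall>\<xi>\<in>?D. onorm \<xi> = onorm (P \<xi>) + onorm (\<lambda>x. \<xi> x - P \<xi> x)"
    and "?F \<subseteq> ?D"
    using F unfolding L_summand_dual_def Let_def by blast
  have "(\<lambda>x. 1 * p x) \<in> ?F" using one_in_K by blast
  then have pD: "p \<in> ?D" and Pp: "P p = p" using \<open>?F \<subseteq> ?D\<close> Pid by auto
  have p_lin: "bounded_linear p" using pD by (simp add: dual_space_def)
  obtain c where "c \<in> K" and P\<xi>: "P \<xi> = (\<lambda>x. c * p x)" using PF \<xi> by blast
  obtain l where "l \<in> K" "cmod l = 1" and lc: "l * c = of_real (cmod c)"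
    using K_phase[OF \<open>c \<in> K\<close>] by blast
  define \<eta> where "\<eta> = (\<lambda>x. \<xi> x - c * p x)"
  have \<eta>_lin: "bounded_linear \<eta>"
    unfolding \<eta>_def using \<xi> bounded_linear_compose[OF bounded_linear_mult_right p_lin]
    by (auto intro: bounded_linear_sub simp: dual_space_def)
  have norm_\<xi>: "onorm \<xi> = cmod c + onorm \<eta>"
    using Pnorm \<xi> P\<xi> onorm_mult_left[OF p_lin, of c] norm_p unfolding \<eta>_def by simp
  define \<phi> where "\<phi> = (\<lambda>x. p x + l * \<xi> x)"
  have l\<xi>: "(\<lambda>x. l * \<xi> x) \<in> ?D" using dual_space_mult_left[OF \<open>l \<in> K\<close> \<xi>] .
  have P\<phi>_expand: "P \<phi> = (\<lambda>x. p x + l * (c * p x))"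
    unfolding \<phi>_def using Padd pD l\<xi> Pmult \<open>l \<in> K\<close> \<xi> Pp P\<xi> by simp
  then have P\<phi>: "P \<phi> = (\<lambda>x. (1 + of_real (cmod c)) * p x)"
    using lc by (simp add: distrib_right flip: mult.assoc)
  have "(\<lambda>x. \<phi> x - P \<phi> x) = (\<lambda>x. l * \<eta> x)"
    unfolding P\<phi>_expand by (simp add: \<phi>_def \<eta>_def algebra_simps)
  then have "onorm \<phi> = onorm (P \<phi>) + onorm (\<lambda>x. l * \<eta> x)"
    using Pnorm dual_space_add[OF pD l\<xi>] unfolding \<phi>_def by simp
  also have "\<dots> = cmod (1 + of_real (cmod c)) + onorm \<eta>"
    using P\<phi> onorm_mult_left[OF p_lin] onorm_mult_left[OF \<eta>_lin] norm_p \<open>cmod l = 1\<close> by simp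
  also have "\<dots> = 1 + onorm \<xi>"
    using norm_\<xi> norm_of_real[of "1 + cmod c"] by simp
  finally show ?thesis unfolding \<phi>_def using \<open>l \<in> K\<close> \<open>cmod l = 1\<close> by blast
qed

lemma nice_embedding_onorm_id_plus_sm_gt:
  fixes J :: "'a \<Rightarrow> ('s::topological_space \<Rightarrow>\<^sub>C complex)"
  assumes J: "nice_embedding K sm J" and T: "bounded_operator K sm T" and r: "r < onorm T"
  shows "\<exists>l\<in>K. cmod l = 1 \<and> 1 + r < onorm (\<lambda>x. x + sm l (T x))"
proof -
  define p where "p s = (\<lambda>x. apply_bcontfun (J x) s)" for s
  have LS: "L_summand_dual K sm {(\<lambda>x. c * p s x) | c. c \<in> K}" and norm_p: "onorm (p s) = 1" for s
    using J by (simp_all add: nice_embedding_def p_def)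
  have pD: "p s \<in> dual_space K sm" for s
  proof -
    have "(\<lambda>x. 1 * p s x) \<in> {(\<lambda>x. c * p s x) | c. c \<in> K}" using one_in_K by blast
    then show ?thesis using LS[of s] by (auto simp: L_summand_dual_def Let_def)
  qed
  have T_lin: "bounded_linear T" using T by (simp add: bounded_operator_def)
  have "\<exists>s. r < onorm (\<lambda>x. p s (T x))"
  proof (rule ccontr)
    assume "\<nexists>s. r < onorm (\<lambda>x. p s (T x))"
    then have "onorm T \<le> r"
      using J dual_space_comp_operator[OF pD T]
      by (intro isometry_onorm_le_evaluations[of J])
         (auto simp: nice_embedding_def dual_space_def p_def not_less)
    with r show False by simp
  qed
  then obtain s where s: "r < onorm (\<lambda>x. p s (T x))" by blast
  obtain l where "l \<in> K" "cmod l = 1"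
    and norm_sum: "onorm (\<lambda>x. p s x + l * p s (T x)) = 1 + onorm (\<lambda>x. p s (T x))"
    using L_summand_line_norm_add[OF LS norm_p dual_space_comp_operator[OF pD T]] by blast
  have p_lin: "bounded_linear (p s)" and p_sm: "p s (sm l x) = l * p s x" for x
    using pD[of s] \<open>l \<in> K\<close> by (auto simp: dual_space_def)
  have "(\<lambda>x. p s x + l * p s (T x)) = p s \<circ> (\<lambda>x. x + sm l (T x))"
    using linear_add[OF bounded_linear.linear[OF p_lin]] p_sm by (simp add: o_def)
  then have "onorm (\<lambda>x. p s x + l * p s (T x)) \<le> onorm (\<lambda>x. x + sm l (T x))"
    using onorm_compose[OF p_lin bounded_linear_add[OF bounded_linear_ident
        bounded_linear_sm_comp[OF T_lin \<open>l \<in> K\<close>]]] norm_p by simp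
  then show ?thesis using \<open>l \<in> K\<close> \<open>cmod l = 1\<close> norm_sum s by force
qed

end

theorem corollary2p2:
  fixes K :: "complex set"
    and sm :: "complex \<Rightarrow> 'a::banach \<Rightarrow> 'a"
    and J :: "'a \<Rightarrow> ('s::t2_space \<Rightarrow>\<^sub>C complex)"
    and T :: "'a \<Rightarrow> 'a"
  assumes "scalar_field K"
    and "banach_over K sm"
    and "nice_embedding K sm J"
    and "bounded_operator K sm T"
  shows "\<exists>l\<in>K. cmod l = 1 \<and>
           onorm (\<lambda>x. x + sm l (T x)) = 1 + onorm (\<lambda>x. sm l (T x))"
proof -
  interpret scalar_banach K sm using assms(1,2) by unfold_locales
  have T: "bounded_linear T" using assms(4) by (simp add: bounded_operator_def)
  define C where "C = K \<inter> sphere 0 1"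
  have "\<exists>l\<in>C. onorm (\<lambda>x. x + sm l (T x)) = 1 + onorm T"
  proof (rule compact_attains_approximated_bound)
    show "compact C" unfolding C_def using closed_K by auto
    show "continuous_on C (\<lambda>l. onorm (\<lambda>x. x + sm l (T x)))"
      using lipschitz_on_continuous_on[OF lipschitz_on_subset[OF lipschitz_on_onorm_id_plus_sm[OF T]]]
      by (simp add: C_def)
    show "onorm (\<lambda>x. x + sm l (T x)) \<le> 1 + onorm T" if "l \<in> C" for l
      using onorm_id_plus_sm_le[OF T] that by (simp add: C_def)
    show "\<exists>l\<in>C. 1 + onorm T - e < onorm (\<lambda>x. x + sm l (T x))" if "0 < e" for e
      using nice_embedding_onorm_id_plus_sm_gt[OF assms(3,4), of "onorm T - e"] that
      by (auto simp: C_def algebra_simps)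
  qed
  then show ?thesis using onorm_sm_comp[OF T] by (auto simp: C_def)
qed

end
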